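(* Let $d$ be prime, $n\ge1$, $G$ nontrivial and invertible over $\mathbb Z_d$, and let $\Lambda_1,\Lambda_2$ be $n$-qudit quantum channels. Then the convolution $\Lambda_1\boxtimes\Lambda_2$ (the channel whose Choi state is $J_{\Lambda_1}\boxtimes J_{\Lambda_2}$) is well defined and satisfies $$\Lambda_1\boxtimes\Lambda_2=\mathcal E\circ(\Lambda_1\otimes\Lambda_2)\circ\mathcal E^{-1},$$ where $\mathcal E(\cdot)=\mathrm{Tr}_B[U(\cdot)U^\dagger]$ and $\mathcal E^{-1}(\rho)=U^\dagger(\rho\otimes I_n/d^n)U$.
   Context: Fix a prime $d$. $G=\begin{pmatrix}g_{00}&g_{01}\\ g_{10}&g_{11}\end{pmatrix}$ over $\mathbb Z_d$, $\det G\not\equiv 0$, $N=(\det G)^{-1}$; nontrivial means at most one entry is $0$ mod $d$. For any $m$, the key unitary on $(\mathbb C^d)^{\otimes m}\otimes(\mathbb C^d)^{\otimes m}$ is $U|\vec i\rangle|\vec j\rangle=|Ng_{11}\vec i-Ng_{10}\vec j\rangle|-Ng_{01}\vec i+Ng_{00}\vec j\rangle$ ($\vec i,\vec j\in\mathbb Z_d^m$), and for $m$-qudit states $\rho\boxtimes\sigma=\mathrm{Tr}_B[U(\rho\otimes\sigma)U^\dagger]$. The Choi state of an $n$-qudit channel $\Lambda$ is the $2n$-qudit state $J_\Lambda=(\mathrm{id}_A\otimes\Lambda)(|\Phi\rangle\langle\Phi|)$ with $|\Phi\rangle=d^{-n/2}\sum_{\vec j\in\mathbb Z_d^n}|\vec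 j\rangle_A|\vec j\rangle_{A'}$, so that $\Lambda(\rho)=d^n\mathrm{Tr}_A[J_\Lambda(\rho^T\otimes I)]$. The convolution $J_{\Lambda_1}\boxtimes J_{\Lambda_2}$ is taken with $m=2n$ (the $2n$ qudits of $AA'$), and $\Lambda_1\boxtimes\Lambda_2$ is the map $\rho\mapsto d^n\mathrm{Tr}_A[(J_{\Lambda_1}\boxtimes J_{\Lambda_2})(\rho^T\otimes I)]$. In $\mathcal E$, $U$ is the key unitary with $m=n$. *)

theory Defs
  imports Complex_Main "HOL-Computational_Algebra.Primes"
begin

text \<open>
  Operators on m qudits (Hilbert space (C^d)^{\<otimes> m}) are represented by their matrix
  elements in the computational basis: a kernel K with K x y = <x|K|y>, where basis
  vectors are lists x of length m with entries in {0..<d} (i.e. elements of Z_d^m).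
  A composite system of m+k qudits is indexed by concatenated lists x @ y.
\<close>

type_synonym qop = "nat list \<Rightarrow> nat list \<Rightarrow> complex"

definition basis :: "nat \<Rightarrow> nat \<Rightarrow> nat list set" where
  "basis d m = {xs. length xs = m \<and> (\<forall>x\<in>set xs. x < d)}"

definition is_op :: "nat \<Rightarrow> nat \<Rightarrow> qop \<Rightarrow> bool" where
  "is_op d m A \<longleftrightarrow> (\<forall>x y. (x \<notin> basis d m \<or> y \<notin> basis d m) \<longrightarrow> A x y = 0)"

definition mmul :: "nat \<Rightarrow> nat \<Rightarrow> qop \<Rightarrow> qop \<Rightarrow> qop" where
  "mmul d m A B = (\<lambda>x y. \<Sum>z\<in>basis d m. A x z * B z y)"

definition adj :: "qop \<Rightarrow> qop" where
  "adj A = (\<lambda>x y. cnj (A y x))"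

definition transp :: "qop \<Rightarrow> qop" where
  "transp A = (\<lambda>x y. A y x)"

definition ident :: "nat \<Rightarrow> nat \<Rightarrow> qop" where
  "ident d m = (\<lambda>x y. if x = y \<and> x \<in> basis d m then 1 else 0)"

definition trace :: "nat \<Rightarrow> nat \<Rightarrow> qop \<Rightarrow> complex" where
  "trace d m A = (\<Sum>x\<in>basis d m. A x x)"

definition tens :: "nat \<Rightarrow> qop \<Rightarrow> qop \<Rightarrow> qop" where
  "tens m A B = (\<lambda>x y. A (take m x) (take m y) * B (drop m x) (drop m y))"

definition ptrace_B :: "nat \<Rightarrow> nat \<Rightarrow> qop \<Rightarrow> qop" where
  "ptrace_B d k X = (\<lambda>x y. \<Sum>z\<in>basis d k. X (x @ z) (y @ z))"

definition ptrace_A :: "nat \<Rightarrow> nat \<Rightarrow> qop \<Rightarrow> qop" where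
  "ptrace_A d m X = (\<lambda>x y. \<Sum>z\<in>basis d m. X (z @ x) (z @ y))"

definition psd :: "nat \<Rightarrow> nat \<Rightarrow> qop \<Rightarrow> bool" where
  "psd d m A \<longleftrightarrow> is_op d m A \<and>
     (\<forall>v :: nat list \<Rightarrow> complex.
        let q = (\<Sum>x\<in>basis d m. \<Sum>y\<in>basis d m. cnj (v x) * A x y * v y)
        in Im q = 0 \<and> Re q \<ge> 0)"

text \<open>id_k \<otimes> \<Lambda> for a linear map \<Lambda> on n-qudit operators, applied to an operator on
  k+n qudits (\<Lambda> acts blockwise on the last n qudits).\<close>
definition idtensor :: "nat \<Rightarrow> (qop \<Rightarrow> qop) \<Rightarrow> qop \<Rightarrow> qop" where
  "idtensor k \<Lambda> X = (\<lambda>x y. \<Lambda> (\<lambda>x' y'. X (take k x @ x') (take k y @ y')) (drop k x) (drop k y))"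

definition is_channel :: "nat \<Rightarrow> nat \<Rightarrow> (qop \<Rightarrow> qop) \<Rightarrow> bool" where
  "is_channel d n \<Lambda> \<longleftrightarrow>
     (\<forall>A B c. is_op d n A \<longrightarrow> is_op d n B \<longrightarrow>
        \<Lambda> (\<lambda>x y. c * A x y + B x y) = (\<lambda>x y. c * \<Lambda> A x y + \<Lambda> B x y)) \<and>
     (\<forall>A. is_op d n A \<longrightarrow> is_op d n (\<Lambda> A)) \<and>
     (\<forall>A. is_op d n A \<longrightarrow> trace d n (\<Lambda> A) = trace d n A) \<and>
     (\<forall>k X. psd d (k + n) X \<longrightarrow> psd d (k + n) (idtensor k \<Lambda> X))"

definition phi :: "nat \<Rightarrow> nat \<Rightarrow> qop" where
  "phi d n = (\<lambda>x y. if x \<in> basis d (2*n) \<and> y \<in> basis d (2*n) \<and>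
                       take n x = drop n x \<and> take n y = drop n y
                    then 1 / of_nat (d ^ n) else 0)"

definition choi :: "nat \<Rightarrow> nat \<Rightarrow> (qop \<Rightarrow> qop) \<Rightarrow> qop" where
  "choi d n \<Lambda> = idtensor n \<Lambda> (phi d n)"

definition chan_of_choi :: "nat \<Rightarrow> nat \<Rightarrow> qop \<Rightarrow> qop \<Rightarrow> qop" where
  "chan_of_choi d n J \<rho> =
     (\<lambda>x y. of_nat (d ^ n) * ptrace_A d n (mmul d (2*n) J (tens n (transp \<rho>) (ident d n))) x y)"

text \<open>G is given by its entries G i j (i,j \<in> {0,1}).\<close>
definition detG :: "(nat \<Rightarrow> nat \<Rightarrow> int) \<Rightarrow> int" where
  "detG G = G 0 0 * G 1 1 - G 0 1 * G 1 0"

definition invertible_G :: "nat \<Rightarrow> (nat \<Rightarrow> nat \<Rightarrow> int) \<Rightarrow> bool" where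
  "invertible_G d G \<longleftrightarrow> detG G mod int d \<noteq> 0"

definition nontrivial_G :: "nat \<Rightarrow> (nat \<Rightarrow> nat \<Rightarrow> int) \<Rightarrow> bool" where
  "nontrivial_G d G \<longleftrightarrow> card {(i, j). i < (2::nat) \<and> j < (2::nat) \<and> G i j mod int d = 0} \<le> 1"

definition zinv :: "nat \<Rightarrow> int \<Rightarrow> int" where
  "zinv d a = (SOME N. 0 \<le> N \<and> N < int d \<and> (N * a) mod int d = 1)"

definition keymap :: "nat \<Rightarrow> (nat \<Rightarrow> nat \<Rightarrow> int) \<Rightarrow> nat \<Rightarrow> nat list \<Rightarrow> nat list" where
  "keymap d G m a =
     (let N = zinv d (detG G); i = take m a; j = drop m a in
      map2 (\<lambda>u v. nat ((N * G 1 1 * int u - N * G 1 0 * int v) mod int d)) i j @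
      map2 (\<lambda>u v. nat ((- N * G 0 1 * int u + N * G 0 0 * int v) mod int d)) i j)"

definition Ukey :: "nat \<Rightarrow> (nat \<Rightarrow> nat \<Rightarrow> int) \<Rightarrow> nat \<Rightarrow> qop" where
  "Ukey d G m = (\<lambda>x a. if a \<in> basis d (2*m) \<and> x = keymap d G m a then 1 else 0)"

definition Emap :: "nat \<Rightarrow> (nat \<Rightarrow> nat \<Rightarrow> int) \<Rightarrow> nat \<Rightarrow> qop \<Rightarrow> qop" where
  "Emap d G m X = ptrace_B d m (mmul d (2*m) (mmul d (2*m) (Ukey d G m) X) (adj (Ukey d G m)))"

definition Einv :: "nat \<Rightarrow> (nat \<Rightarrow> nat \<Rightarrow> int) \<Rightarrow> nat \<Rightarrow> qop \<Rightarrow> qop" where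
  "Einv d G m \<rho> = mmul d (2*m) (mmul d (2*m) (adj (Ukey d G m))
        (\<lambda>x y. tens m \<rho> (ident d m) x y / of_nat (d ^ m))) (Ukey d G m)"

definition qconv :: "nat \<Rightarrow> (nat \<Rightarrow> nat \<Rightarrow> int) \<Rightarrow> nat \<Rightarrow> qop \<Rightarrow> qop \<Rightarrow> qop" where
  "qconv d G m \<rho> \<sigma> = Emap d G m (tens m \<rho> \<sigma>)"

definition chan_conv :: "nat \<Rightarrow> (nat \<Rightarrow> nat \<Rightarrow> int) \<Rightarrow> nat \<Rightarrow> (qop \<Rightarrow> qop) \<Rightarrow> (qop \<Rightarrow> qop) \<Rightarrow> qop \<Rightarrow> qop" where
  "chan_conv d G n \<Lambda>1 \<Lambda>2 = chan_of_choi d n (qconv d G (2*n) (choi d n \<Lambda>1) (choi d n \<Lambda>2))"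

text \<open>Tensor product \<Lambda>1 \<otimes> \<Lambda>2 of linear maps on n-qudit operators, defined by linear
  extension from matrix units: (\<Lambda>1 \<otimes> \<Lambda>2)(|a a'><b b'|) = \<Lambda>1(|a><b|) \<otimes> \<Lambda>2(|a'><b'|).\<close>
definition munit :: "nat \<Rightarrow> nat \<Rightarrow> nat list \<Rightarrow> nat list \<Rightarrow> qop" where
  "munit d n a b = (\<lambda>x y. if x = a \<and> y = b \<and> a \<in> basis d n \<and> b \<in> basis d n then 1 else 0)"

definition chan_tensor :: "nat \<Rightarrow> nat \<Rightarrow> (qop \<Rightarrow> qop) \<Rightarrow> (qop \<Rightarrow> qop) \<Rightarrow> qop \<Rightarrow> qop" where
  "chan_tensor d n \<Lambda>1 \<Lambda>2 X = (\<lambda>x y. \<Sum>a\<in>basis d (2*n). \<Sum>b\<in>basis d (2*n).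
      X a b * tens n (\<Lambda>1 (munit d n (take n a) (take n b)))
                     (\<Lambda>2 (munit d n (drop n a) (drop n b))) x y)"

end

(*
  Both sides of the identity are computed entrywise in the computational basis. The key unitary
  permutes basis vectors, U^\<dagger> |p\<rangle>|q\<rangle> = |G^T (p,q)\<rangle>, so every partial trace and matrix product
  collapses to a sum over basis strings relabelled by G^T. After these relabellings (which are
  bijections because det G is invertible mod d) both sides reduce to the same normal form
  (1/d^n) \<Sigma>_{t,u} conv_term t u \<rho> x y. The same normal form shows that the trace is preserved
  (each \<Lambda>_i preserves the trace of a matrix unit) and that the map is completely positive:
  (id_k \<otimes> (\<Lambda>1 \<boxtimes> \<Lambda>2))(X) is an average over t, u of compressions of the positive operators
  (id_k \<otimes> \<Lambda>1 \<otimes> \<Lambda>2)(V_t X V_t^\<dagger>), where V_t |r\<rangle>|z\<rangle> = |r\<rangle> \<otimes> U^\<dagger>|z\<rangle>|t\<rangle>.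
*)

theory Submission
  imports Defs "HOL-Number_Theory.Cong" "HOL-Library.Complex_Order"
begin

section \<open>Computational basis and finite sums\<close>

lemma finite_basis [simp]: "finite (basis d m)"
proof (rule finite_subset)
  show "basis d m \<subseteq> {xs. set xs \<subseteq> {..<d} \<and> length xs = m}" by (auto simp: basis_def)
qed (rule finite_lists_length_eq[OF finite_lessThan])

lemma card_basis: "card (basis d m) = d ^ m"
proof -
  have "basis d m = {xs. set xs \<subseteq> {..<d} \<and> length xs = m}" by (auto simp: basis_def)
  then show ?thesis using card_lists_length_eq[of "{..<d}" m] by simp
qed

lemma length_basis: "x \<in> basis d m \<Longrightarrow> length x = m"
  by (simp add: basis_def)

lemma append_in_basis_iff:
  "length a = m \<Longrightarrow> a @ b \<in> basis d (m + k) \<longleftrightarrow> a \<in> basis d m \<and> b \<in> basis d k"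
  by (auto simp: basis_def)

lemma append_in_basis: "a \<in> basis d m \<Longrightarrow> b \<in> basis d k \<Longrightarrow> a @ b \<in> basis d (m + k)"
  by (auto simp: basis_def)

lemma append_in_basis_double: "a \<in> basis d m \<Longrightarrow> b \<in> basis d m \<Longrightarrow> a @ b \<in> basis d (2 * m)"
  using append_in_basis[of a d m b m] by (simp add: mult_2)

lemma append_in_basis_double_iff:
  "a \<in> basis d m \<Longrightarrow> a @ b \<in> basis d (2 * m) \<longleftrightarrow> b \<in> basis d m"
  "b \<in> basis d m \<Longrightarrow> a @ b \<in> basis d (2 * m) \<longleftrightarrow> a \<in> basis d m"
  by (auto simp: basis_def)

lemma take_in_basis: "x \<in> basis d (m + k) \<Longrightarrow> take m x \<in> basis d m"
  by (auto simp: basis_def dest: in_set_takeD)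

lemma drop_in_basis: "x \<in> basis d (m + k) \<Longrightarrow> drop m x \<in> basis d k"
  by (auto simp: basis_def dest: in_set_dropD)

lemma take_drop_in_basis_double:
  "x \<in> basis d (2 * m) \<Longrightarrow> take m x \<in> basis d m \<and> drop m x \<in> basis d m"
  using take_in_basis[of x d m m] drop_in_basis[of x d m m] by (simp add: mult_2)

lemma bij_betw_append_basis:
  "bij_betw (\<lambda>(a, b). a @ b) (basis d m \<times> basis d k) (basis d (m + k))"
proof (rule bij_betw_byWitness[where f' = "\<lambda>x. (take m x, drop m x)"])
  show "(\<lambda>(a, b). a @ b) ` (basis d m \<times> basis d k) \<subseteq> basis d (m + k)"
    by (auto intro: append_in_basis)
  show "(\<lambda>x. (take m x, drop m x)) ` basis d (m + k) \<subseteq> basis d m \<times> basis d k"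
    by (auto intro: take_in_basis drop_in_basis)
qed (auto simp: basis_def)

lemma sum_basis_append:
  "(\<Sum>x\<in>basis d (m + k). f x) = (\<Sum>a\<in>basis d m. \<Sum>b\<in>basis d k. f (a @ b))"
  by (simp add: sum.reindex_bij_betw[OF bij_betw_append_basis, symmetric]
      sum.cartesian_product split_def)

lemma sum_basis_double:
  "(\<Sum>x\<in>basis d (2 * m). f x) = (\<Sum>a\<in>basis d m. \<Sum>b\<in>basis d m. f (a @ b))"
  using sum_basis_append[where k = m] by (simp add: mult_2)

lemma sum_basis_double_suffix:
  assumes "t \<in> basis d m"
  shows "(\<Sum>x\<in>basis d (2 * m). if drop m x = t then f x else 0) = (\<Sum>a\<in>basis d m. f (a @ t))"
  using assms by (simp add: sum_basis_double length_basis if_distrib[of "\<lambda>b. b = t"] sum.delta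
      cong: if_cong)

lemma sum_swap_inner_pairs:
  "(\<Sum>a\<in>A. \<Sum>b\<in>B. \<Sum>c\<in>C. \<Sum>e\<in>E. f a b c e) = (\<Sum>c\<in>C. \<Sum>e\<in>E. \<Sum>a\<in>A. \<Sum>b\<in>B. f a b c e)"
proof -
  have "(\<Sum>a\<in>A. \<Sum>b\<in>B. \<Sum>c\<in>C. \<Sum>e\<in>E. f a b c e) = (\<Sum>a\<in>A. \<Sum>c\<in>C. \<Sum>e\<in>E. \<Sum>b\<in>B. f a b c e)"
    by (intro sum.cong refl) (simp add: sum.swap[of _ B] sum.swap[of _ B E])
  also have "\<dots> = (\<Sum>c\<in>C. \<Sum>e\<in>E. \<Sum>a\<in>A. \<Sum>b\<in>B. f a b c e)"
    by (simp add: sum.swap[of _ A] sum.swap[of _ A E])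
  finally show ?thesis .
qed

lemma sum_delta_factor:
  assumes "finite S" and "t \<in> S"
  shows "(\<Sum>t'\<in>S. c * (if t = t' then 1 else 0) * g t' / D) = c * g t / (D :: 'a :: field)"
proof -
  have "(\<Sum>t'\<in>S. c * (if t = t' then 1 else 0) * g t' / D) = (\<Sum>t'\<in>S. if t = t' then c * g t' / D else 0)"
    by (rule sum.cong) auto
  with assms show ?thesis by simp
qed

section \<open>Operators, channels and Choi states\<close>

lemma is_op_zero: "is_op d n (\<lambda>x y. 0)"
  by (simp add: is_op_def)

lemma munit_is_op: "is_op d n (munit d n a b)"
  by (simp add: is_op_def munit_def)

lemma op_eq_sum_munit:
  assumes "is_op d n A"
  shows "A = (\<lambda>x y. \<Sum>(a, b)\<in>basis d n \<times> basis d n. A a b * munit d n a b x y)"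
proof (intro ext)
  fix x y
  have "(\<Sum>(a, b)\<in>basis d n \<times> basis d n. A a b * munit d n a b x y)
      = (\<Sum>p\<in>basis d n \<times> basis d n. if p = (x, y) then A x y else 0)"
    by (intro sum.cong refl) (clarsimp simp: munit_def)
  also have "\<dots> = A x y"
    using assms by (auto simp: is_op_def)
  finally show "A x y = (\<Sum>(a, b)\<in>basis d n \<times> basis d n. A a b * munit d n a b x y)" ..
qed

lemma channel_zero:
  assumes "is_channel d n \<Lambda>"
  shows "\<Lambda> (\<lambda>x y. 0) = (\<lambda>x y. 0)"
proof -
  have "\<Lambda> (\<lambda>x y. 1 * 0 + 0) = (\<lambda>x y. 1 * \<Lambda> (\<lambda>x y. 0) x y + \<Lambda> (\<lambda>x y. 0) x y)"
    using assms is_op_zero unfolding is_channel_def by blast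
  then have "\<Lambda> (\<lambda>x y. 0) x y = 2 * \<Lambda> (\<lambda>x y. 0) x y" for x y
    by (simp add: fun_eq_iff)
  then show ?thesis by (intro ext) simp
qed

lemma channel_sum:
  assumes ch: "is_channel d n \<Lambda>" and "finite S" and ops: "\<forall>i\<in>S. is_op d n (f i)"
  shows "\<Lambda> (\<lambda>x y. \<Sum>i\<in>S. c i * f i x y) = (\<lambda>x y. \<Sum>i\<in>S. c i * \<Lambda> (f i) x y)"
  using \<open>finite S\<close> ops
proof (induction S rule: finite_induct)
  case empty
  then show ?case using channel_zero[OF ch] by simp
next
  case (insert j S)
  have "is_op d n (\<lambda>x y. \<Sum>i\<in>S. c i * f i x y)"
    using insert by (auto simp: is_op_def intro!: sum.neutral)
  with insert ch show ?case by (simp add: is_channel_def)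
qed

lemma channel_eq_sum_munit:
  assumes ch: "is_channel d n \<Lambda>" and A: "is_op d n A"
  shows "\<Lambda> A x y = (\<Sum>a\<in>basis d n. \<Sum>b\<in>basis d n. A a b * \<Lambda> (munit d n a b) x y)"
proof -
  have "\<Lambda> A = \<Lambda> (\<lambda>x y. \<Sum>(a, b)\<in>basis d n \<times> basis d n. A a b * munit d n a b x y)"
    using op_eq_sum_munit[OF A] by simp
  also have "\<dots> = (\<lambda>x y. \<Sum>(a, b)\<in>basis d n \<times> basis d n. A a b * \<Lambda> (munit d n a b) x y)"
    using channel_sum[OF ch, where f = "\<lambda>(a, b). munit d n a b" and c = "\<lambda>(a, b). A a b"]
    by (simp add: split_def munit_is_op)
  finally show ?thesis by (simp add: sum.cartesian_product)
qed

lemma trace_channel_munit: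
  assumes "is_channel d n \<Lambda>" and "a \<in> basis d n" and "b \<in> basis d n"
  shows "(\<Sum>x\<in>basis d n. \<Lambda> (munit d n a b) x x) = (if a = b then 1 else 0)"
proof -
  have "trace d n (munit d n a b) = (if a = b then 1 else 0)"
    using assms(2,3) by (auto simp: trace_def munit_def intro: sum.neutral)
  with assms(1) show ?thesis by (simp add: is_channel_def trace_def munit_is_op)
qed

lemma channel_completely_positive:
  "is_channel d n \<Lambda> \<Longrightarrow> psd d (k + n) X \<Longrightarrow> psd d (k + n) (idtensor k \<Lambda> X)"
  by (simp add: is_channel_def)

lemma idtensor_append_eq_sum_munit:
  assumes ch: "is_channel d n \<Lambda>" and X: "is_op d (k + n) X"
    and r: "r \<in> basis d k" and s: "s \<in> basis d k"
  shows "idtensor k \<Lambda> X (r @ p) (s @ q) =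
    (\<Sum>a\<in>basis d n. \<Sum>b\<in>basis d n. X (r @ a) (s @ b) * \<Lambda> (munit d n a b) p q)"
proof -
  have len: "length r = k" "length s = k" using r s by (simp_all add: length_basis)
  then have "is_op d n (\<lambda>x' y'. X (r @ x') (s @ y'))"
    using X r s by (auto simp: is_op_def append_in_basis_iff)
  with len show ?thesis by (simp add: idtensor_def channel_eq_sum_munit[OF ch])
qed

lemma choi_append:
  assumes ch: "is_channel d n \<Lambda>"
    and "a \<in> basis d n" "b \<in> basis d n" "x \<in> basis d n" "y \<in> basis d n"
  shows "choi d n \<Lambda> (a @ x) (b @ y) = \<Lambda> (munit d n a b) x y / of_nat (d ^ n)"
proof -
  have "(\<lambda>x' y'. phi d n (a @ x') (b @ y')) = (\<lambda>x' y'. (1 / of_nat (d ^ n)) * munit d n a b x' y')"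
    using assms(2,3) by (auto simp: phi_def munit_def length_basis append_in_basis_double_iff fun_eq_iff)
  moreover have "\<Lambda> (\<lambda>x' y'. (1 / of_nat (d ^ n)) * munit d n a b x' y') =
      (\<lambda>x' y'. (1 / of_nat (d ^ n)) * \<Lambda> (munit d n a b) x' y')"
    using channel_sum[OF ch, of "{()}" "\<lambda>_. munit d n a b" "\<lambda>_. 1 / of_nat (d ^ n)"] by (simp add: munit_is_op)
  ultimately show ?thesis
    using assms(2,3) by (simp add: choi_def idtensor_def length_basis)
qed

lemma chan_of_choi_apply:
  assumes x: "x \<in> basis d n" and y: "y \<in> basis d n"
  shows "chan_of_choi d n J \<rho> x y =
    of_nat (d ^ n) * (\<Sum>z\<in>basis d n. \<Sum>w\<in>basis d n. J (z @ x) (w @ y) * \<rho> z w)"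
proof -
  have "(\<Sum>v\<in>basis d (2 * n). J (z @ x) v * tens n (transp \<rho>) (ident d n) v (z @ y)) =
      (\<Sum>w\<in>basis d n. J (z @ x) (w @ y) * \<rho> z w)" if z: "z \<in> basis d n" for z
    using z y by (simp add: sum_basis_double tens_def transp_def ident_def length_basis
        if_distrib[of "\<lambda>c. _ * c"] sum.delta' cong: if_cong)
  then show ?thesis
    by (simp add: chan_of_choi_def ptrace_A_def mmul_def)
qed

lemma chan_of_choi_is_op:
  assumes "is_op d (2 * n) J"
  shows "is_op d n (chan_of_choi d n J \<rho>)"
  unfolding is_op_def
proof (intro allI impI)
  fix x y assume "x \<notin> basis d n \<or> y \<notin> basis d n"
  then have "J (z @ x) v * tens n (transp \<rho>) (ident d n) v (z @ y) = 0"
    if "z \<in> basis d n" for z v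
    using assms that by (auto simp: is_op_def append_in_basis_double_iff tens_def ident_def
        length_basis)
  then show "chan_of_choi d n J \<rho> x y = 0"
    by (simp add: chan_of_choi_def ptrace_A_def mmul_def sum.neutral)
qed

lemma chan_of_choi_zero: "chan_of_choi d n J (\<lambda>x y. 0) = (\<lambda>x y. 0)"
  by (simp add: chan_of_choi_def ptrace_A_def mmul_def tens_def transp_def)

lemma chan_of_choi_linear:
  "chan_of_choi d n J (\<lambda>x y. c * A x y + B x y) =
    (\<lambda>x y. c * chan_of_choi d n J A x y + chan_of_choi d n J B x y)"
  by (intro ext) (simp add: chan_of_choi_def ptrace_A_def mmul_def tens_def transp_def
      sum.distrib sum_distrib_left algebra_simps)

section \<open>Positivity\<close>

definition qform :: "nat \<Rightarrow> nat \<Rightarrow> qop \<Rightarrow> (nat list \<Rightarrow> complex) \<Rightarrow> complex" where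
  "qform d m A v = (\<Sum>x\<in>basis d m. \<Sum>y\<in>basis d m. cnj (v x) * A x y * v y)"

lemma psd_iff_qform: "psd d m A \<longleftrightarrow> is_op d m A \<and> (\<forall>v. 0 \<le> qform d m A v)"
  by (auto simp: psd_def qform_def Let_def less_eq_complex_def)

lemma qform_pullback:
  assumes \<psi>: "\<And>x. x \<in> basis d m \<Longrightarrow> \<psi> x \<in> basis d m'"
  shows "(\<Sum>x\<in>basis d m. \<Sum>y\<in>basis d m. cnj (v x) * A (\<psi> x) (\<psi> y) * v y) =
    qform d m' A (\<lambda>p. sum v {x \<in> basis d m. \<psi> x = p})"
proof -
  let ?fib = "\<lambda>p. {x \<in> basis d m. \<psi> x = p}"
  let ?h = "\<lambda>x y. cnj (v x) * A (\<psi> x) (\<psi> y) * v y"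
  have img: "\<psi> ` basis d m \<subseteq> basis d m'" using \<psi> by auto
  have "cnj (sum v (?fib p)) * A p q * sum v (?fib q) = (\<Sum>x\<in>?fib p. \<Sum>y\<in>?fib q. ?h x y)" for p q
  proof -
    have "cnj (sum v (?fib p)) * A p q * sum v (?fib q) =
        (\<Sum>x\<in>?fib p. \<Sum>y\<in>?fib q. cnj (v x) * A p q * v y)"
      by (simp add: cnj_sum sum_distrib_left sum_distrib_right) (rule sum.swap)
    also have "\<dots> = (\<Sum>x\<in>?fib p. \<Sum>y\<in>?fib q. ?h x y)"
      by (intro sum.cong refl) auto
    finally show ?thesis .
  qed
  then have "qform d m' A (\<lambda>p. sum v (?fib p)) =
      (\<Sum>p\<in>basis d m'. \<Sum>q\<in>basis d m'. \<Sum>x\<in>?fib p. \<Sum>y\<in>?fib q. ?h x y)"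
    by (simp add: qform_def)
  also have "\<dots> = (\<Sum>p\<in>basis d m'. \<Sum>x\<in>?fib p. \<Sum>q\<in>basis d m'. \<Sum>y\<in>?fib q. ?h x y)"
    by (intro sum.cong refl sum.swap)
  also have "\<dots> = (\<Sum>p\<in>basis d m'. \<Sum>x\<in>?fib p. \<Sum>y\<in>basis d m. ?h x y)"
    by (simp only: sum.group[OF finite_basis finite_basis img])
  also have "\<dots> = (\<Sum>x\<in>basis d m. \<Sum>y\<in>basis d m. ?h x y)"
    by (rule sum.group[OF finite_basis finite_basis img])
  finally show ?thesis ..
qed

lemma psd_pullback_qform_nonneg:
  assumes "psd d m' A" and "\<And>x. x \<in> basis d m \<Longrightarrow> \<psi> x \<in> basis d m'"
  shows "0 \<le> (\<Sum>x\<in>basis d m. \<Sum>y\<in>basis d m. cnj (v x) * A (\<psi> x) (\<psi> y) * v y)"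
  using assms(1) qform_pullback[OF assms(2), where v = v and A = A] by (simp add: psd_iff_qform)

lemma psd_pullback:
  assumes "psd d m' A" and "\<And>x. x \<in> basis d m \<Longrightarrow> \<psi> x \<in> basis d m'"
  shows "psd d m (\<lambda>x y. if x \<in> basis d m \<and> y \<in> basis d m then A (\<psi> x) (\<psi> y) else 0)"
  using psd_pullback_qform_nonneg[OF assms] by (simp add: psd_iff_qform qform_def is_op_def)

(* push \<chi> X is V X V^\<dagger> for the partial isometry V sending |x\<rangle> to |\<chi> x\<rangle>. *)
definition push :: "nat \<Rightarrow> nat \<Rightarrow> (nat list \<Rightarrow> nat list) \<Rightarrow> qop \<Rightarrow> qop" where
  "push d m \<chi> X R S = (if R \<in> \<chi> ` basis d m \<and> S \<in> \<chi> ` basis d m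
     then X (inv_into (basis d m) \<chi> R) (inv_into (basis d m) \<chi> S) else 0)"

lemma push_image:
  "inj_on \<chi> (basis d m) \<Longrightarrow> x \<in> basis d m \<Longrightarrow> y \<in> basis d m \<Longrightarrow> push d m \<chi> X (\<chi> x) (\<chi> y) = X x y"
  by (simp add: push_def)

lemma push_is_op: "\<chi> ` basis d m \<subseteq> basis d m' \<Longrightarrow> is_op d m' (push d m \<chi> X)"
  by (auto simp: is_op_def push_def)

lemma qform_push:
  assumes inj: "inj_on \<chi> (basis d m)" and img: "\<chi> ` basis d m \<subseteq> basis d m'"
  shows "qform d m' (push d m \<chi> X) W = qform d m X (W \<circ> \<chi>)"
proof -
  let ?I = "\<chi> ` basis d m"
  let ?h = "\<lambda>R S. cnj (W R) * push d m \<chi> X R S * W S"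
  have "qform d m' (push d m \<chi> X) W = (\<Sum>R\<in>?I. \<Sum>S\<in>basis d m'. ?h R S)"
    unfolding qform_def using img by (intro sum.mono_neutral_right) (auto simp: push_def)
  also have "\<dots> = (\<Sum>R\<in>?I. \<Sum>S\<in>?I. ?h R S)"
    using img by (intro sum.cong refl sum.mono_neutral_right) (auto simp: push_def)
  also have "\<dots> = qform d m X (W \<circ> \<chi>)"
    using inj by (simp add: sum.reindex qform_def push_image)
  finally show ?thesis .
qed

lemma psd_push:
  assumes "psd d m X" and "inj_on \<chi> (basis d m)" and "\<chi> ` basis d m \<subseteq> basis d m'"
  shows "psd d m' (push d m \<chi> X)"
  using assms push_is_op[OF assms(3)] by (simp add: psd_iff_qform qform_push)

definition swap_blocks :: "nat \<Rightarrow> nat \<Rightarrow> nat \<Rightarrow> qop \<Rightarrow> qop" where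
  "swap_blocks d k n X R S = (if R \<in> basis d (k + n + n) \<and> S \<in> basis d (k + n + n)
     then X (take k R @ drop (k + n) R @ take n (drop k R)) (take k S @ drop (k + n) S @ take n (drop k S))
     else 0)"

(* (id_k \<otimes> \<Lambda>1 \<otimes> \<Lambda>2)(X), with the output of \<Lambda>2 in the middle block and that of \<Lambda>1 in the
   last one (see idtensor_pair_apply). *)
definition idtensor_pair :: "nat \<Rightarrow> nat \<Rightarrow> nat \<Rightarrow> (qop \<Rightarrow> qop) \<Rightarrow> (qop \<Rightarrow> qop) \<Rightarrow> qop \<Rightarrow> qop" where
  "idtensor_pair d k n \<Lambda>1 \<Lambda>2 X = idtensor (k + n) \<Lambda>1 (swap_blocks d k n (idtensor (k + n) \<Lambda>2 X))"

lemma psd_idtensor_pair: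
  assumes "is_channel d n \<Lambda>1" "is_channel d n \<Lambda>2" and "psd d (k + n + n) X"
  shows "psd d (k + n + n) (idtensor_pair d k n \<Lambda>1 \<Lambda>2 X)"
proof -
  have "psd d (k + n + n) (idtensor (k + n) \<Lambda>2 X)"
    using assms by (simp add: channel_completely_positive)
  then have "psd d (k + n + n) (swap_blocks d k n (idtensor (k + n) \<Lambda>2 X))"
    unfolding swap_blocks_def
    by (rule psd_pullback) (auto simp: basis_def dest: in_set_takeD in_set_dropD)
  then show ?thesis
    using assms by (simp add: idtensor_pair_def channel_completely_positive)
qed

lemma idtensor_pair_apply:
  assumes ch: "is_channel d n \<Lambda>1" "is_channel d n \<Lambda>2" and X: "is_op d (k + n + n) X"
    and r: "r \<in> basis d k" and s: "s \<in> basis d k" and "p2 \<in> basis d n" "q2 \<in> basis d n"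
  shows "idtensor_pair d k n \<Lambda>1 \<Lambda>2 X (r @ p2 @ p1) (s @ q2 @ q1) =
    (\<Sum>a\<in>basis d (2 * n). \<Sum>b\<in>basis d (2 * n). X (r @ a) (s @ b) *
      (\<Lambda>1 (munit d n (take n a) (take n b)) p1 q1 * \<Lambda>2 (munit d n (drop n a) (drop n b)) p2 q2))"
proof -
  let ?Y = "swap_blocks d k n (idtensor (k + n) \<Lambda>2 X)"
  have rp: "r @ p2 \<in> basis d (k + n)" "s @ q2 \<in> basis d (k + n)"
    using assms by (simp_all add: append_in_basis)
  have "is_op d (k + n + n) ?Y"
    by (simp add: is_op_def swap_blocks_def)
  then have "idtensor_pair d k n \<Lambda>1 \<Lambda>2 X (r @ p2 @ p1) (s @ q2 @ q1) =
      (\<Sum>a1\<in>basis d n. \<Sum>b1\<in>basis d n. ?Y ((r @ p2) @ a1) ((s @ q2) @ b1) * \<Lambda>1 (munit d n a1 b1) p1 q1)"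
    using idtensor_append_eq_sum_munit[OF ch(1) _ rp] by (simp add: idtensor_pair_def)
  also have "\<dots> = (\<Sum>a1\<in>basis d n. \<Sum>b1\<in>basis d n. \<Sum>a2\<in>basis d n. \<Sum>b2\<in>basis d n.
      X (r @ a1 @ a2) (s @ b1 @ b2) * (\<Lambda>1 (munit d n a1 b1) p1 q1 * \<Lambda>2 (munit d n a2 b2) p2 q2))"
  proof (intro sum.cong refl)
    fix a1 b1 assume "a1 \<in> basis d n" "b1 \<in> basis d n"
    with assms have "?Y ((r @ p2) @ a1) ((s @ q2) @ b1) = idtensor (k + n) \<Lambda>2 X ((r @ a1) @ p2) ((s @ b1) @ q2)"
      by (auto simp: swap_blocks_def basis_def)
    also have "\<dots> = (\<Sum>a2\<in>basis d n. \<Sum>b2\<in>basis d n. X (r @ a1 @ a2) (s @ b1 @ b2) * \<Lambda>2 (munit d n a2 b2) p2 q2)"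
      using idtensor_append_eq_sum_munit[OF ch(2) X append_in_basis append_in_basis]
        \<open>a1 \<in> _\<close> \<open>b1 \<in> _\<close> r s by simp
    finally show "?Y ((r @ p2) @ a1) ((s @ q2) @ b1) * \<Lambda>1 (munit d n a1 b1) p1 q1 =
      (\<Sum>a2\<in>basis d n. \<Sum>b2\<in>basis d n.
        X (r @ a1 @ a2) (s @ b1 @ b2) * (\<Lambda>1 (munit d n a1 b1) p1 q1 * \<Lambda>2 (munit d n a2 b2) p2 q2))"
      by (simp add: sum_distrib_left sum_distrib_right mult_ac)
  qed
  also have "\<dots> = (\<Sum>a1\<in>basis d n. \<Sum>a2\<in>basis d n. \<Sum>b1\<in>basis d n. \<Sum>b2\<in>basis d n.
      X (r @ a1 @ a2) (s @ b1 @ b2) * (\<Lambda>1 (munit d n a1 b1) p1 q1 * \<Lambda>2 (munit d n a2 b2) p2 q2))"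
    by (rule sum.cong[OF refl], rule sum.swap)
  also have "\<dots> = (\<Sum>a\<in>basis d (2 * n). \<Sum>b\<in>basis d (2 * n). X (r @ a) (s @ b) *
      (\<Lambda>1 (munit d n (take n a) (take n b)) p1 q1 * \<Lambda>2 (munit d n (drop n a) (drop n b)) p2 q2))"
    unfolding sum_basis_double by (intro sum.cong refl) (simp add: length_basis)
  finally show ?thesis .
qed

section \<open>The key unitary\<close>

lemma zinv_mult_mod:
  assumes "1 < d" and "coprime a (int d)"
  shows "zinv d a * a mod int d = 1"
proof -
  obtain x where "[a * x = 1] (mod int d)"
    using cong_solve_coprime_int[OF assms(2)] by blast
  moreover have "x mod int d * a mod int d = a * x mod int d"
    by (metis mod_mult_left_eq mult.commute)
  ultimately have "x mod int d * a mod int d = 1"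
    using assms(1) by (simp add: cong_def)
  then have "\<exists>N. 0 \<le> N \<and> N < int d \<and> N * a mod int d = 1"
    using assms(1) by (intro exI[of _ "x mod int d"]) simp
  then show ?thesis
    unfolding zinv_def by (rule someI2_ex) blast
qed

lemma coprime_det_if_invertible_G:
  assumes "prime d" and "invertible_G d G"
  shows "coprime (detG G) (int d)"
proof -
  have "\<not> int d dvd detG G"
    using assms(2) by (simp add: invertible_G_def dvd_eq_mod_eq_0)
  then show ?thesis
    using prime_imp_coprime[of "int d" "detG G"] assms(1) by (simp add: coprime_commute)
qed

lemma mod_lincomb_mod: "(a * (x mod m) + b * (y mod m)) mod m = (a * x + b * y) mod (m :: int)"
  by (metis mod_add_eq mod_mult_right_eq)

lemma map2_in_basis:
  assumes "\<And>u v. f u v < d" and "i \<in> basis d m" and "j \<in> basis d m"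
  shows "map2 f i j \<in> basis d m"
  using assms by (auto simp: basis_def dest!: set_zip_leftD)

locale key_map =
  fixes d :: nat and G :: "nat \<Rightarrow> nat \<Rightarrow> int"
  assumes d_gt_1: "1 < d" and coprime_det: "coprime (detG G) (int d)"
begin

(* key_A, key_B are the two output digits of U (as in keymap); U^\<dagger> acts digitwise by G^T. *)
definition key_A :: "nat \<Rightarrow> nat \<Rightarrow> nat" where
  "key_A u v = nat ((zinv d (detG G) * G 1 1 * int u - zinv d (detG G) * G 1 0 * int v) mod int d)"

definition key_B :: "nat \<Rightarrow> nat \<Rightarrow> nat" where
  "key_B u v = nat ((- zinv d (detG G) * G 0 1 * int u + zinv d (detG G) * G 0 0 * int v) mod int d)"

definition keyinv_A :: "nat \<Rightarrow> nat \<Rightarrow> nat" where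
  "keyinv_A p q = nat ((G 0 0 * int p + G 1 0 * int q) mod int d)"

definition keyinv_B :: "nat \<Rightarrow> nat \<Rightarrow> nat" where
  "keyinv_B p q = nat ((G 0 1 * int p + G 1 1 * int q) mod int d)"

lemma det_inv_cancel: "zinv d (detG G) * detG G * x mod int d = x mod int d"
  using zinv_mult_mod[OF d_gt_1 coprime_det] by (metis mod_mult_left_eq mult_1)

(* Each identity reduces, modulo d, to N * det G * w = w with N = zinv d (detG G). *)
lemma keyinv_key:
  assumes "u < d" "v < d"
  shows "keyinv_A (key_A u v) (key_B u v) = u" "keyinv_B (key_A u v) (key_B u v) = v"
    and "key_A (keyinv_A u v) (keyinv_B u v) = u" "key_B (keyinv_A u v) (keyinv_B u v) = v"
proof -
  let ?N = "zinv d (detG G)"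
  have pos: "0 < int d" using d_gt_1 by simp
  have uv: "int u = int u mod int d" "int v = int v mod int d" using assms by simp_all
  have "int (keyinv_A (key_A u v) (key_B u v)) = (G 0 0 * ((?N * G 1 1 * int u - ?N * G 1 0 * int v) mod int d)
      + G 1 0 * ((- ?N * G 0 1 * int u + ?N * G 0 0 * int v) mod int d)) mod int d"
    using pos by (simp add: keyinv_A_def key_A_def key_B_def)
  also have "\<dots> = ?N * detG G * int u mod int d"
    unfolding mod_lincomb_mod by (simp add: detG_def algebra_simps)
  finally show "keyinv_A (key_A u v) (key_B u v) = u" using uv by (simp add: det_inv_cancel)
  have "int (keyinv_B (key_A u v) (key_B u v)) = (G 0 1 * ((?N * G 1 1 * int u - ?N * G 1 0 * int v) mod int d)
      + G 1 1 * ((- ?N * G 0 1 * int u + ?N * G 0 0 * int v) mod int d)) mod int d"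
    using pos by (simp add: keyinv_B_def key_A_def key_B_def)
  also have "\<dots> = ?N * detG G * int v mod int d"
    unfolding mod_lincomb_mod by (simp add: detG_def algebra_simps)
  finally show "keyinv_B (key_A u v) (key_B u v) = v" using uv by (simp add: det_inv_cancel)
  have "int (key_A (keyinv_A u v) (keyinv_B u v)) = ((?N * G 1 1) * ((G 0 0 * int u + G 1 0 * int v) mod int d)
      + (- ?N * G 1 0) * ((G 0 1 * int u + G 1 1 * int v) mod int d)) mod int d"
    using pos by (simp add: keyinv_A_def keyinv_B_def key_A_def)
  also have "\<dots> = ?N * detG G * int u mod int d"
    unfolding mod_lincomb_mod by (simp add: detG_def algebra_simps)
  finally show "key_A (keyinv_A u v) (keyinv_B u v) = u" using uv by (simp add: det_inv_cancel)
  have "int (key_B (keyinv_A u v) (keyinv_B u v)) = ((- ?N * G 0 1) * ((G 0 0 * int u + G 1 0 * int v) mod int d)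
      + (?N * G 0 0) * ((G 0 1 * int u + G 1 1 * int v) mod int d)) mod int d"
    using pos by (simp add: keyinv_A_def keyinv_B_def key_B_def)
  also have "\<dots> = ?N * detG G * int v mod int d"
    unfolding mod_lincomb_mod by (simp add: detG_def algebra_simps)
  finally show "key_B (keyinv_A u v) (keyinv_B u v) = v" using uv by (simp add: det_inv_cancel)
qed

lemma key_less [simp]: "key_A u v < d" "key_B u v < d" "keyinv_A u v < d" "keyinv_B u v < d"
proof -
  have "nat (x mod int d) < d" for x
    using d_gt_1 by (simp add: nat_less_iff)
  then show "key_A u v < d" "key_B u v < d" "keyinv_A u v < d" "keyinv_B u v < d"
    unfolding key_A_def key_B_def keyinv_A_def keyinv_B_def by blast+
qed

lemma keymap_eq: "keymap d G m a = map2 key_A (take m a) (drop m a) @ map2 key_B (take m a) (drop m a)"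
  by (simp add: keymap_def Let_def key_A_def[abs_def] key_B_def[abs_def])

abbreviation mix_A :: "nat list \<Rightarrow> nat list \<Rightarrow> nat list" where
  "mix_A \<equiv> map2 keyinv_A"

abbreviation mix_B :: "nat list \<Rightarrow> nat list \<Rightarrow> nat list" where
  "mix_B \<equiv> map2 keyinv_B"

definition keyinv :: "nat \<Rightarrow> nat list \<Rightarrow> nat list" where
  "keyinv m a = mix_A (take m a) (drop m a) @ mix_B (take m a) (drop m a)"

lemma mix_in_basis: "i \<in> basis d m \<Longrightarrow> j \<in> basis d m \<Longrightarrow> mix_A i j \<in> basis d m \<and> mix_B i j \<in> basis d m"
  by (simp add: map2_in_basis)

lemma keyinv_append:
  "length z = m \<Longrightarrow> length t = m \<Longrightarrow> keyinv m (z @ t) = mix_A z t @ mix_B z t"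
  by (simp add: keyinv_def)

lemma keyinv_append_double:
  assumes "length z = n" "length x = n" "length t = n" "length u = n"
  shows "keyinv (2 * n) ((z @ x) @ (t @ u)) =
    (mix_A z t @ mix_A x u) @ (mix_B z t @ mix_B x u)"
  using assms by (simp add: keyinv_def mult_2 zip_append)

lemma
  assumes "a \<in> basis d (2 * m)"
  shows keymap_in_basis: "keymap d G m a \<in> basis d (2 * m)"
    and keyinv_in_basis: "keyinv m a \<in> basis d (2 * m)"
proof -
  have halves: "take m a \<in> basis d m" "drop m a \<in> basis d m"
    using take_drop_in_basis_double[OF assms] by auto
  show "keymap d G m a \<in> basis d (2 * m)"
    unfolding keymap_eq by (rule append_in_basis_double[OF map2_in_basis map2_in_basis]) (simp_all add: halves)
  show "keyinv m a \<in> basis d (2 * m)"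
    unfolding keyinv_def by (rule append_in_basis_double[OF map2_in_basis map2_in_basis]) (simp_all add: halves)
qed

lemma map2_key_inverse:
  assumes "length i = length j" "set i \<subseteq> {..<d}" "set j \<subseteq> {..<d}"
  shows "mix_A (map2 key_A i j) (map2 key_B i j) = i" "mix_B (map2 key_A i j) (map2 key_B i j) = j"
    and "map2 key_A (mix_A i j) (mix_B i j) = i" "map2 key_B (mix_A i j) (mix_B i j) = j"
  using assms by (induction i j rule: list_induct2) (auto simp: keyinv_key)

lemma keyinv_keymap: "a \<in> basis d (2 * m) \<Longrightarrow> keyinv m (keymap d G m a) = a"
  and keymap_keyinv: "a \<in> basis d (2 * m) \<Longrightarrow> keymap d G m (keyinv m a) = a"
proof -
  assume "a \<in> basis d (2 * m)"
  then have halves: "take m a \<in> basis d m" "drop m a \<in> basis d m"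
    by (simp_all add: take_drop_in_basis_double)
  then have len: "length (take m a) = m" "length (drop m a) = m"
    and "set (take m a) \<subseteq> {..<d}" "set (drop m a) \<subseteq> {..<d}"
    by (auto simp: basis_def)
  note inv = map2_key_inverse[OF _ this(3,4)]
  show "keyinv m (keymap d G m a) = a" "keymap d G m (keyinv m a) = a"
    unfolding keymap_eq keyinv_def using len by (simp_all add: inv)
qed

lemma sum_basis_keyinv: "(\<Sum>a\<in>basis d (2 * m). f (keyinv m a)) = (\<Sum>a\<in>basis d (2 * m). f a)"
proof -
  have "bij_betw (keyinv m) (basis d (2 * m)) (basis d (2 * m))"
    by (rule bij_betw_byWitness[where f' = "keymap d G m"])
      (auto simp: keyinv_in_basis keymap_in_basis keymap_keyinv keyinv_keymap)
  then show ?thesis by (rule sum.reindex_bij_betw)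
qed

lemma sum_basis_keyinv2:
  "(\<Sum>a\<in>basis d (2 * m). \<Sum>b\<in>basis d (2 * m). f (keyinv m a) (keyinv m b)) =
    (\<Sum>a\<in>basis d (2 * m). \<Sum>b\<in>basis d (2 * m). f a b)"
  using sum_basis_keyinv[of "\<lambda>a. \<Sum>b\<in>basis d (2 * m). f a (keyinv m b)" m]
  by (simp add: sum_basis_keyinv[of "f _" m])

lemma Ukey_eq:
  assumes "r \<in> basis d (2 * m)"
  shows "Ukey d G m r a = (if a = keyinv m r then 1 else 0)"
proof (cases "a = keyinv m r")
  case True
  then show ?thesis using assms by (simp add: Ukey_def keyinv_in_basis keymap_keyinv)
next
  case False
  then have "\<not> (a \<in> basis d (2 * m) \<and> r = keymap d G m a)" by (auto simp: keyinv_keymap)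
  then show ?thesis using False by (simp add: Ukey_def)
qed

lemma Ukey_conj_apply:
  assumes p: "p \<in> basis d (2 * m)" and q: "q \<in> basis d (2 * m)"
  shows "mmul d (2 * m) (mmul d (2 * m) (Ukey d G m) Y) (adj (Ukey d G m)) p q =
    Y (keyinv m p) (keyinv m q)"
proof -
  have U: "mmul d (2 * m) (Ukey d G m) Y p b = Y (keyinv m p) b" for b
    using keyinv_in_basis[OF p]
    by (simp add: mmul_def Ukey_eq[OF p] if_distrib[of "\<lambda>c. c * _"] sum.delta cong: if_cong)
  have "adj (Ukey d G m) b q = (if b = keyinv m q then 1 else 0)" for b
    by (simp add: adj_def Ukey_eq[OF q])
  then have adjU: "mmul d (2 * m) X (adj (Ukey d G m)) a q = X a (keyinv m q)" for X a
    using keyinv_in_basis[OF q]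
    by (simp add: mmul_def if_distrib[of "\<lambda>c. _ * c"] sum.delta cong: if_cong)
  show ?thesis by (simp add: U adjU)
qed

lemma Ukey_conj_outside:
  assumes "p \<notin> basis d (2 * m) \<or> q \<notin> basis d (2 * m)"
  shows "mmul d (2 * m) (mmul d (2 * m) (Ukey d G m) Y) (adj (Ukey d G m)) p q = 0"
  using assms by (auto simp: mmul_def Ukey_def adj_def keymap_in_basis intro!: sum.neutral)

lemma Emap_apply:
  assumes "x \<in> basis d m" and "y \<in> basis d m"
  shows "Emap d G m Y x y = (\<Sum>z\<in>basis d m. Y (keyinv m (x @ z)) (keyinv m (y @ z)))"
  unfolding Emap_def ptrace_B_def
  using assms by (intro sum.cong refl) (simp add: Ukey_conj_apply append_in_basis_double)

lemma Emap_is_op: "is_op d m (Emap d G m Y)"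
  by (auto simp: is_op_def Emap_def ptrace_B_def append_in_basis_double_iff Ukey_conj_outside
      intro!: sum.neutral)

lemma Einv_apply:
  assumes a: "a \<in> basis d (2 * m)" and b: "b \<in> basis d (2 * m)"
  shows "Einv d G m \<rho> a b = tens m \<rho> (ident d m) (keymap d G m a) (keymap d G m b) / of_nat (d ^ m)"
proof -
  have adjU: "mmul d (2 * m) (adj (Ukey d G m)) X a c = X (keymap d G m a) c" for X c
  proof -
    have "mmul d (2 * m) (adj (Ukey d G m)) X a c =
        (\<Sum>z\<in>basis d (2 * m). if z = keymap d G m a then X z c else 0)"
      unfolding mmul_def Ukey_def adj_def by (rule sum.cong) (use a in auto)
    then show ?thesis using keymap_in_basis[OF a] by simp
  qed
  have U: "mmul d (2 * m) X (Ukey d G m) c b = X c (keymap d G m b)" for X c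
  proof -
    have "mmul d (2 * m) X (Ukey d G m) c b =
        (\<Sum>z\<in>basis d (2 * m). if z = keymap d G m b then X c z else 0)"
      unfolding mmul_def Ukey_def by (rule sum.cong) (use b in auto)
    then show ?thesis using keymap_in_basis[OF b] by simp
  qed
  show ?thesis
    unfolding Einv_def U adjU ..
qed

lemma sum_mix:
  "(\<Sum>x\<in>basis d n. \<Sum>u\<in>basis d n. f (mix_A x u) (mix_B x u)) = (\<Sum>p\<in>basis d n. \<Sum>q\<in>basis d n. f p q)"
proof -
  let ?g = "\<lambda>a. f (take n a) (drop n a)"
  have "(\<Sum>x\<in>basis d n. \<Sum>u\<in>basis d n. f (mix_A x u) (mix_B x u)) =
      (\<Sum>x\<in>basis d n. \<Sum>u\<in>basis d n. ?g (keyinv n (x @ u)))"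
    by (intro sum.cong refl) (simp add: keyinv_append length_basis)
  also have "\<dots> = (\<Sum>a\<in>basis d (2 * n). ?g a)"
    using sum_basis_double[of "\<lambda>a. ?g (keyinv n a)" d n] sum_basis_keyinv[of ?g n] by simp
  also have "\<dots> = (\<Sum>p\<in>basis d n. \<Sum>q\<in>basis d n. f p q)"
    unfolding sum_basis_double by (intro sum.cong refl) (simp add: length_basis)
  finally show ?thesis .
qed

lemma mix_eq_iff:
  assumes "z \<in> basis d n" "w \<in> basis d n" "t \<in> basis d n"
  shows "mix_A z t = mix_A w t \<and> mix_B z t = mix_B w t \<longleftrightarrow> z = w"
proof
  assume "mix_A z t = mix_A w t \<and> mix_B z t = mix_B w t"
  then have "keyinv n (z @ t) = keyinv n (w @ t)"
    using assms by (simp add: keyinv_append length_basis)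
  then have "keymap d G n (keyinv n (z @ t)) = keymap d G n (keyinv n (w @ t))" by simp
  then show "z = w"
    using assms by (simp add: keymap_keyinv append_in_basis_double)
qed simp

end

section \<open>Convolution of channels\<close>

locale channel_pair = key_map d G for d G +
  fixes n :: nat and \<Lambda>1 \<Lambda>2 :: "qop \<Rightarrow> qop"
  assumes channel_1: "is_channel d n \<Lambda>1" and channel_2: "is_channel d n \<Lambda>2"
begin

(* Both sides of the main identity equal (1/d^n) \<Sigma>_{t,u} conv_term t u \<rho> x y. *)
definition conv_term :: "nat list \<Rightarrow> nat list \<Rightarrow> qop \<Rightarrow> qop" where
  "conv_term t u \<rho> x y = (\<Sum>z\<in>basis d n. \<Sum>w\<in>basis d n. \<rho> z w *
     (\<Lambda>1 (munit d n (mix_A z t) (mix_A w t)) (mix_A x u) (mix_A y u) *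
      \<Lambda>2 (munit d n (mix_B z t) (mix_B w t)) (mix_B x u) (mix_B y u)))"

lemma choi_conv_apply:
  assumes z: "z \<in> basis d n" and x: "x \<in> basis d n" and w: "w \<in> basis d n" and y: "y \<in> basis d n"
  shows "qconv d G (2 * n) (choi d n \<Lambda>1) (choi d n \<Lambda>2) (z @ x) (w @ y) =
    (\<Sum>t\<in>basis d n. \<Sum>u\<in>basis d n.
       (\<Lambda>1 (munit d n (mix_A z t) (mix_A w t)) (mix_A x u) (mix_A y u) / of_nat (d ^ n)) *
       (\<Lambda>2 (munit d n (mix_B z t) (mix_B w t)) (mix_B x u) (mix_B y u) / of_nat (d ^ n)))"
proof -
  let ?D = "of_nat (d ^ n) :: complex"
  have "qconv d G (2 * n) (choi d n \<Lambda>1) (choi d n \<Lambda>2) (z @ x) (w @ y) =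
    (\<Sum>t\<in>basis d n. \<Sum>u\<in>basis d n. tens (2 * n) (choi d n \<Lambda>1) (choi d n \<Lambda>2)
       (keyinv (2 * n) ((z @ x) @ (t @ u))) (keyinv (2 * n) ((w @ y) @ (t @ u))))"
    using assms by (simp add: qconv_def Emap_apply append_in_basis_double sum_basis_double)
  also have "\<dots> = (\<Sum>t\<in>basis d n. \<Sum>u\<in>basis d n.
      (\<Lambda>1 (munit d n (mix_A z t) (mix_A w t)) (mix_A x u) (mix_A y u) / ?D) *
      (\<Lambda>2 (munit d n (mix_B z t) (mix_B w t)) (mix_B x u) (mix_B y u) / ?D))"
  proof (intro sum.cong refl)
    fix t u assume t: "t \<in> basis d n" and u: "u \<in> basis d n"
    have mix: "mix_A z t \<in> basis d n" "mix_A w t \<in> basis d n" "mix_A x u \<in> basis d n"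
      "mix_A y u \<in> basis d n" "mix_B z t \<in> basis d n" "mix_B w t \<in> basis d n"
      "mix_B x u \<in> basis d n" "mix_B y u \<in> basis d n"
      using mix_in_basis assms t u by blast+
    show "tens (2 * n) (choi d n \<Lambda>1) (choi d n \<Lambda>2)
        (keyinv (2 * n) ((z @ x) @ (t @ u))) (keyinv (2 * n) ((w @ y) @ (t @ u))) =
      (\<Lambda>1 (munit d n (mix_A z t) (mix_A w t)) (mix_A x u) (mix_A y u) / ?D) *
      (\<Lambda>2 (munit d n (mix_B z t) (mix_B w t)) (mix_B x u) (mix_B y u) / ?D)"
      using assms t u unfolding tens_def
      by (simp only: keyinv_append_double length_basis) (simp add: length_basis
          choi_append[OF channel_1 mix(1-4)] choi_append[OF channel_2 mix(5-8)])
  qed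
  finally show ?thesis .
qed

lemma chan_conv_apply:
  assumes x: "x \<in> basis d n" and y: "y \<in> basis d n"
  shows "chan_conv d G n \<Lambda>1 \<Lambda>2 \<rho> x y = (\<Sum>t\<in>basis d n. \<Sum>u\<in>basis d n. conv_term t u \<rho> x y) / of_nat (d ^ n)"
proof -
  let ?D = "of_nat (d ^ n) :: complex"
  let ?K = "\<lambda>z w t u. \<Lambda>1 (munit d n (mix_A z t) (mix_A w t)) (mix_A x u) (mix_A y u) *
       \<Lambda>2 (munit d n (mix_B z t) (mix_B w t)) (mix_B x u) (mix_B y u)"
  have "chan_conv d G n \<Lambda>1 \<Lambda>2 \<rho> x y = (\<Sum>z\<in>basis d n. \<Sum>w\<in>basis d n. \<Sum>t\<in>basis d n. \<Sum>u\<in>basis d n.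
      ?D * ((\<Lambda>1 (munit d n (mix_A z t) (mix_A w t)) (mix_A x u) (mix_A y u) / ?D) *
        (\<Lambda>2 (munit d n (mix_B z t) (mix_B w t)) (mix_B x u) (mix_B y u) / ?D) * \<rho> z w))"
    using assms by (simp add: chan_conv_def chan_of_choi_apply choi_conv_apply sum_distrib_left
        sum_distrib_right)
  also have "\<dots> = (\<Sum>z\<in>basis d n. \<Sum>w\<in>basis d n. \<Sum>t\<in>basis d n. \<Sum>u\<in>basis d n. \<rho> z w * ?K z w t u / ?D)"
  proof -
    have "D \<noteq> 0 \<Longrightarrow> D * (a / D * (b / D) * c) = c * (a * b) / D" for D a b c :: complex
      by (simp add: field_simps)
    moreover have "?D \<noteq> 0" using d_gt_1 by simp
    ultimately show ?thesis by (intro sum.cong refl) blast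
  qed
  also have "\<dots> = (\<Sum>z\<in>basis d n. \<Sum>w\<in>basis d n. \<Sum>t\<in>basis d n. \<Sum>u\<in>basis d n. \<rho> z w * ?K z w t u) / ?D"
    by (simp only: sum_divide_distrib)
  also have "\<dots> = (\<Sum>t\<in>basis d n. \<Sum>u\<in>basis d n. conv_term t u \<rho> x y) / ?D"
    unfolding conv_term_def by (subst sum_swap_inner_pairs) (rule refl)
  finally show ?thesis .
qed

lemma chan_tensor_Einv_apply:
  assumes x: "x \<in> basis d n" and y: "y \<in> basis d n" and u: "u \<in> basis d n"
  shows "chan_tensor d n \<Lambda>1 \<Lambda>2 (Einv d G n \<rho>) (keyinv n (x @ u)) (keyinv n (y @ u)) =
    (\<Sum>t\<in>basis d n. conv_term t u \<rho> x y) / of_nat (d ^ n)"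
proof -
  let ?D = "of_nat (d ^ n) :: complex"
  let ?K = "\<lambda>a b. \<Lambda>1 (munit d n (take n a) (take n b)) (mix_A x u) (mix_A y u) *
    \<Lambda>2 (munit d n (drop n a) (drop n b)) (mix_B x u) (mix_B y u)"
  let ?T = "tens n \<rho> (ident d n)"
  have "chan_tensor d n \<Lambda>1 \<Lambda>2 (Einv d G n \<rho>) (keyinv n (x @ u)) (keyinv n (y @ u)) =
      (\<Sum>a\<in>basis d (2 * n). \<Sum>b\<in>basis d (2 * n). Einv d G n \<rho> a b * ?K a b)"
    using assms by (simp add: chan_tensor_def keyinv_append tens_def length_basis)
  also have "\<dots> = (\<Sum>a\<in>basis d (2 * n). \<Sum>b\<in>basis d (2 * n).
      Einv d G n \<rho> (keyinv n a) (keyinv n b) * ?K (keyinv n a) (keyinv n b))"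
    using sum_basis_keyinv2[of "\<lambda>a b. Einv d G n \<rho> a b * ?K a b" n] by simp
  also have "\<dots> = (\<Sum>a\<in>basis d (2 * n). \<Sum>b\<in>basis d (2 * n). ?T a b / ?D * ?K (keyinv n a) (keyinv n b))"
    by (intro sum.cong refl) (simp add: Einv_apply keyinv_in_basis keymap_keyinv)
  also have "\<dots> = (\<Sum>s\<in>basis d n. \<Sum>t\<in>basis d n. \<Sum>s'\<in>basis d n. \<Sum>t'\<in>basis d n.
      ?T (s @ t) (s' @ t') / ?D * ?K (keyinv n (s @ t)) (keyinv n (s' @ t')))"
    by (simp only: sum_basis_double)
  also have "\<dots> = (\<Sum>s\<in>basis d n. \<Sum>t\<in>basis d n. \<Sum>s'\<in>basis d n.
      \<rho> s s' / ?D * ?K (keyinv n (s @ t)) (keyinv n (s' @ t)))"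
    by (intro sum.cong refl) (simp add: tens_def ident_def length_basis sum_delta_factor)
  also have "\<dots> = (\<Sum>t\<in>basis d n. \<Sum>s\<in>basis d n. \<Sum>s'\<in>basis d n.
      \<rho> s s' / ?D * ?K (keyinv n (s @ t)) (keyinv n (s' @ t)))"
    by (rule sum.swap)
  also have "\<dots> = (\<Sum>t\<in>basis d n. conv_term t u \<rho> x y) / ?D"
    unfolding conv_term_def sum_divide_distrib
    by (intro sum.cong refl) (simp add: keyinv_append length_basis)
  finally show ?thesis .
qed

lemma Emap_chan_tensor_Einv_apply:
  assumes x: "x \<in> basis d n" and y: "y \<in> basis d n"
  shows "Emap d G n (chan_tensor d n \<Lambda>1 \<Lambda>2 (Einv d G n \<rho>)) x y =
    (\<Sum>t\<in>basis d n. \<Sum>u\<in>basis d n. conv_term t u \<rho> x y) / of_nat (d ^ n)"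
proof -
  have "Emap d G n (chan_tensor d n \<Lambda>1 \<Lambda>2 (Einv d G n \<rho>)) x y =
      (\<Sum>u\<in>basis d n. \<Sum>t\<in>basis d n. conv_term t u \<rho> x y) / of_nat (d ^ n)"
    using assms by (simp add: Emap_apply chan_tensor_Einv_apply sum_divide_distrib)
  also have "\<dots> = (\<Sum>t\<in>basis d n. \<Sum>u\<in>basis d n. conv_term t u \<rho> x y) / of_nat (d ^ n)"
    by (subst sum.swap) (rule refl)
  finally show ?thesis .
qed

lemma sum_conv_term_diag:
  assumes t: "t \<in> basis d n"
  shows "(\<Sum>x\<in>basis d n. \<Sum>u\<in>basis d n. conv_term t u \<rho> x x) = trace d n \<rho>"
proof -
  let ?L1 = "\<lambda>z w. \<Lambda>1 (munit d n (mix_A z t) (mix_A w t))"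
  let ?L2 = "\<lambda>z w. \<Lambda>2 (munit d n (mix_B z t) (mix_B w t))"
  have "(\<Sum>x\<in>basis d n. \<Sum>u\<in>basis d n. conv_term t u \<rho> x x) =
      (\<Sum>z\<in>basis d n. \<Sum>w\<in>basis d n. \<rho> z w *
        (\<Sum>x\<in>basis d n. \<Sum>u\<in>basis d n. ?L1 z w (mix_A x u) (mix_A x u) * ?L2 z w (mix_B x u) (mix_B x u)))"
    unfolding conv_term_def by (subst sum_swap_inner_pairs) (simp add: sum_distrib_left)
  also have "\<dots> = (\<Sum>z\<in>basis d n. \<Sum>w\<in>basis d n. \<rho> z w *
        ((\<Sum>p\<in>basis d n. ?L1 z w p p) * (\<Sum>q\<in>basis d n. ?L2 z w q q)))"
    by (intro sum.cong refl)
      (simp add: sum_product sum_mix[where f = "\<lambda>p q. ?L1 _ _ p p * ?L2 _ _ q q"])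
  also have "\<dots> = (\<Sum>z\<in>basis d n. \<Sum>w\<in>basis d n. if z = w then \<rho> z w else 0)"
  proof (intro sum.cong refl)
    fix z w assume "z \<in> basis d n" "w \<in> basis d n"
    with t show "\<rho> z w * ((\<Sum>p\<in>basis d n. ?L1 z w p p) * (\<Sum>q\<in>basis d n. ?L2 z w q q)) =
        (if z = w then \<rho> z w else 0)"
      using mix_eq_iff[where z = z and w = w and t = t and n = n] mix_in_basis
      by (auto simp: trace_channel_munit[OF channel_1] trace_channel_munit[OF channel_2])
  qed
  also have "\<dots> = trace d n \<rho>"
    by (simp add: trace_def)
  finally show ?thesis .
qed

lemma trace_chan_conv: "trace d n (chan_conv d G n \<Lambda>1 \<Lambda>2 \<rho>) = trace d n \<rho>"
proof -
  have "trace d n (chan_conv d G n \<Lambda>1 \<Lambda>2 \<rho>) =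
      (\<Sum>x\<in>basis d n. \<Sum>t\<in>basis d n. \<Sum>u\<in>basis d n. conv_term t u \<rho> x x) / of_nat (d ^ n)"
    by (simp add: trace_def chan_conv_apply sum_divide_distrib)
  also have "\<dots> = (\<Sum>t\<in>basis d n. \<Sum>x\<in>basis d n. \<Sum>u\<in>basis d n. conv_term t u \<rho> x x) / of_nat (d ^ n)"
    by (subst sum.swap) (rule refl)
  also have "\<dots> = trace d n \<rho>"
    using d_gt_1 by (simp add: sum_conv_term_diag card_basis)
  finally show ?thesis .
qed

lemma chan_conv_is_op: "is_op d n (chan_conv d G n \<Lambda>1 \<Lambda>2 \<rho>)"
  unfolding chan_conv_def qconv_def by (rule chan_of_choi_is_op, rule Emap_is_op)

(* lift_key k t is the isometry |r\<rangle>|z\<rangle> \<mapsto> |r\<rangle> \<otimes> U^\<dagger>|z\<rangle>|t\<rangle> on basis vectors. *)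
definition lift_key :: "nat \<Rightarrow> nat list \<Rightarrow> nat list \<Rightarrow> nat list" where
  "lift_key k t x = take k x @ keyinv n (drop k x @ t)"

lemma lift_key_in_basis:
  assumes "t \<in> basis d n"
  shows "lift_key k t ` basis d (k + n) \<subseteq> basis d (k + n + n)"
proof
  fix R assume "R \<in> lift_key k t ` basis d (k + n)"
  then obtain x where x: "x \<in> basis d (k + n)" and R: "R = lift_key k t x" by blast
  have "keyinv n (drop k x @ t) \<in> basis d (n + n)"
    using keyinv_in_basis append_in_basis_double drop_in_basis[OF x] assms by (metis mult_2)
  then show "R \<in> basis d (k + n + n)"
    using append_in_basis[OF take_in_basis[OF x]] by (simp add: R lift_key_def add.assoc)
qed

lemma keyinv_append_right_inj:
  assumes "z \<in> basis d n" "w \<in> basis d n" "t \<in> basis d n" "keyinv n (z @ t) = keyinv n (w @ t)"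
  shows "z = w"
  using assms mix_eq_iff by (simp add: keyinv_append length_basis)

lemma inj_on_lift_key:
  assumes "t \<in> basis d n"
  shows "inj_on (lift_key k t) (basis d (k + n))"
proof
  fix x y assume x: "x \<in> basis d (k + n)" and y: "y \<in> basis d (k + n)"
    and eq: "lift_key k t x = lift_key k t y"
  have "length (take k x) = k" "length (take k y) = k"
    using x y by (simp_all add: length_basis)
  with eq have "take k x = take k y" "keyinv n (drop k x @ t) = keyinv n (drop k y @ t)"
    by (simp_all add: lift_key_def)
  moreover have "drop k x = drop k y"
    using keyinv_append_right_inj[OF drop_in_basis[OF x] drop_in_basis[OF y] assms] calculation(2) .
  ultimately show "x = y" by (metis append_take_drop_id)
qed

lemma append_keyinv_in_lift_key_image_iff:
  assumes t: "t \<in> basis d n" and r: "r \<in> basis d k" and a: "a \<in> basis d (2 * n)"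
  shows "r @ keyinv n a \<in> lift_key k t ` basis d (k + n) \<longleftrightarrow> drop n a = t"
proof
  assume "r @ keyinv n a \<in> lift_key k t ` basis d (k + n)"
  then obtain x where x: "x \<in> basis d (k + n)" and eq: "r @ keyinv n a = lift_key k t x" by blast
  have "length r = k" "length (take k x) = k"
    using r x by (simp_all add: length_basis)
  with eq have "keyinv n a = keyinv n (drop k x @ t)"
    by (simp add: lift_key_def)
  then have "a = drop k x @ t"
    by (metis a keymap_keyinv append_in_basis_double drop_in_basis[OF x] t)
  then show "drop n a = t"
    using length_basis[OF drop_in_basis[OF x]] by (metis append_eq_conv_conj)
next
  assume "drop n a = t"
  then have "a = take n a @ t" by (metis append_take_drop_id)
  moreover have "r @ take n a \<in> basis d (k + n)"
    using r take_drop_in_basis_double[OF a] by (simp add: append_in_basis)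
  ultimately show "r @ keyinv n a \<in> lift_key k t ` basis d (k + n)"
    using r by (intro image_eqI[of _ _ "r @ take n a"]) (simp_all add: lift_key_def length_basis)
qed

lemma push_lift_key_apply:
  assumes t: "t \<in> basis d n" and r: "r \<in> basis d k" and s: "s \<in> basis d k"
    and a: "a \<in> basis d (2 * n)" and b: "b \<in> basis d (2 * n)"
  shows "push d (k + n) (lift_key k t) X (r @ keyinv n a) (s @ keyinv n b) =
    (if drop n a = t \<and> drop n b = t then X (r @ take n a) (s @ take n b) else 0)"
proof (cases "drop n a = t \<and> drop n b = t")
  case True
  have "r @ keyinv n a = lift_key k t (r @ take n a)"
    using r True[THEN conjunct1, symmetric] by (simp add: lift_key_def length_basis)
  moreover have "s @ keyinv n b = lift_key k t (s @ take n b)"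
    using s True[THEN conjunct2, symmetric] by (simp add: lift_key_def length_basis)
  moreover have "r @ take n a \<in> basis d (k + n)" "s @ take n b \<in> basis d (k + n)"
    using r s take_drop_in_basis_double[OF a] take_drop_in_basis_double[OF b]
    by (simp_all add: append_in_basis)
  ultimately show ?thesis
    using True push_image[OF inj_on_lift_key[OF t]] by simp
next
  case False
  then show ?thesis
    using append_keyinv_in_lift_key_image_iff[OF t r a] append_keyinv_in_lift_key_image_iff[OF t s b]
    by (auto simp: push_def)
qed

lemma conv_term_eq_idtensor_pair:
  assumes X: "is_op d (k + n) X" and t: "t \<in> basis d n" and u: "u \<in> basis d n"
    and r: "r \<in> basis d k" and s: "s \<in> basis d k" and x: "x \<in> basis d n" and y: "y \<in> basis d n"
  shows "conv_term t u (\<lambda>x' y'. X (r @ x') (s @ y')) x y =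
    idtensor_pair d k n \<Lambda>1 \<Lambda>2 (push d (k + n) (lift_key k t) X)
      (r @ mix_B x u @ mix_A x u) (s @ mix_B y u @ mix_A y u)"
proof -
  let ?Z = "push d (k + n) (lift_key k t) X"
  let ?K = "\<lambda>a b. \<Lambda>1 (munit d n (take n a) (take n b)) (mix_A x u) (mix_A y u) *
    \<Lambda>2 (munit d n (drop n a) (drop n b)) (mix_B x u) (mix_B y u)"
  have "idtensor_pair d k n \<Lambda>1 \<Lambda>2 ?Z (r @ mix_B x u @ mix_A x u) (s @ mix_B y u @ mix_A y u) =
      (\<Sum>a\<in>basis d (2 * n). \<Sum>b\<in>basis d (2 * n). ?Z (r @ a) (s @ b) * ?K a b)"
    using x y u mix_in_basis
    by (intro idtensor_pair_apply channel_1 channel_2 push_is_op lift_key_in_basis t r s) blast+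
  also have "\<dots> = (\<Sum>a\<in>basis d (2 * n). \<Sum>b\<in>basis d (2 * n).
      ?Z (r @ keyinv n a) (s @ keyinv n b) * ?K (keyinv n a) (keyinv n b))"
    using sum_basis_keyinv2[of "\<lambda>a b. ?Z (r @ a) (s @ b) * ?K a b" n] by simp
  also have "\<dots> = (\<Sum>a\<in>basis d (2 * n). if drop n a = t then (\<Sum>b\<in>basis d (2 * n). if drop n b = t
      then X (r @ take n a) (s @ take n b) * ?K (keyinv n a) (keyinv n b) else 0) else 0)"
    by (intro sum.cong refl) (auto simp: push_lift_key_apply[OF t r s] intro!: sum.cong)
  also have "\<dots> = (\<Sum>z\<in>basis d n. \<Sum>w\<in>basis d n.
      X (r @ z) (s @ w) * ?K (keyinv n (z @ t)) (keyinv n (w @ t)))"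
    using t by (simp add: sum_basis_double_suffix length_basis)
  also have "\<dots> = conv_term t u (\<lambda>x' y'. X (r @ x') (s @ y')) x y"
    unfolding conv_term_def using t by (intro sum.cong refl) (simp add: keyinv_append length_basis)
  finally show ?thesis ..
qed

(* 1 \<le> n is needed: for n = 0, drop k x \<in> basis d 0 holds for every x of length at most k. *)
lemma idtensor_chan_conv_is_op:
  assumes n: "1 \<le> n" and X: "is_op d (k + n) X"
  shows "is_op d (k + n) (idtensor k (chan_conv d G n \<Lambda>1 \<Lambda>2) X)"
  unfolding is_op_def
proof (intro allI impI)
  fix x y assume xy: "x \<notin> basis d (k + n) \<or> y \<notin> basis d (k + n)"
  show "idtensor k (chan_conv d G n \<Lambda>1 \<Lambda>2) X x y = 0"
  proof (cases "drop k x \<in> basis d n \<and> drop k y \<in> basis d n")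
    case False
    then show ?thesis
      using chan_conv_is_op by (auto simp: idtensor_def is_op_def)
  next
    case True
    with n have len: "length (take k x) = k" "length (take k y) = k"
      by (auto simp: basis_def)
    then have "x = take k x @ drop k x" "y = take k y @ drop k y" by simp_all
    with True xy len have "take k x \<notin> basis d k \<or> take k y \<notin> basis d k"
      by (metis append_in_basis_iff)
    then have "(\<lambda>x' y'. X (take k x @ x') (take k y @ y')) = (\<lambda>x' y'. 0)"
      using X len by (auto simp: is_op_def append_in_basis_iff)
    then show ?thesis
      by (simp add: idtensor_def chan_conv_def chan_of_choi_zero)
  qed
qed

definition conv_index :: "nat \<Rightarrow> nat list \<Rightarrow> nat list \<Rightarrow> nat list" where
  "conv_index k u x = take k x @ mix_B (drop k x) u @ mix_A (drop k x) u"

lemma conv_index_in_basis: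
  "u \<in> basis d n \<Longrightarrow> x \<in> basis d (k + n) \<Longrightarrow> conv_index k u x \<in> basis d (k + n + n)"
  unfolding conv_index_def
  using take_in_basis drop_in_basis mix_in_basis append_in_basis by (metis add.assoc)

lemma idtensor_chan_conv_apply:
  assumes X: "is_op d (k + n) X" and x: "x \<in> basis d (k + n)" and y: "y \<in> basis d (k + n)"
  shows "idtensor k (chan_conv d G n \<Lambda>1 \<Lambda>2) X x y =
    (\<Sum>t\<in>basis d n. \<Sum>u\<in>basis d n. idtensor_pair d k n \<Lambda>1 \<Lambda>2 (push d (k + n) (lift_key k t) X)
      (conv_index k u x) (conv_index k u y)) / of_nat (d ^ n)"
  using take_in_basis[OF x] take_in_basis[OF y] drop_in_basis[OF x] drop_in_basis[OF y]
  by (simp add: idtensor_def chan_conv_apply conv_term_eq_idtensor_pair[OF X] conv_index_def)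

lemma qform_idtensor_chan_conv:
  assumes X: "is_op d (k + n) X"
  shows "qform d (k + n) (idtensor k (chan_conv d G n \<Lambda>1 \<Lambda>2) X) v =
    (\<Sum>t\<in>basis d n. \<Sum>u\<in>basis d n. \<Sum>x\<in>basis d (k + n). \<Sum>y\<in>basis d (k + n).
      cnj (v x) * idtensor_pair d k n \<Lambda>1 \<Lambda>2 (push d (k + n) (lift_key k t) X)
        (conv_index k u x) (conv_index k u y) * v y) / of_nat (d ^ n)"
proof -
  let ?h = "\<lambda>t u x y. cnj (v x) * idtensor_pair d k n \<Lambda>1 \<Lambda>2 (push d (k + n) (lift_key k t) X)
    (conv_index k u x) (conv_index k u y) * v y"
  have scale: "a * ((\<Sum>t\<in>T. \<Sum>u\<in>U. f t u) / c) * b = (\<Sum>t\<in>T. \<Sum>u\<in>U. a * f t u * b / c)"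
    for a b c :: complex and f :: "nat list \<Rightarrow> nat list \<Rightarrow> complex" and T U
    by (simp add: sum_divide_distrib sum_distrib_left sum_distrib_right mult_ac)
  have "cnj (v x) * idtensor k (chan_conv d G n \<Lambda>1 \<Lambda>2) X x y * v y =
      (\<Sum>t\<in>basis d n. \<Sum>u\<in>basis d n. ?h t u x y / of_nat (d ^ n))"
    if "x \<in> basis d (k + n)" "y \<in> basis d (k + n)" for x y
    unfolding idtensor_chan_conv_apply[OF X that] by (rule scale)
  then have "qform d (k + n) (idtensor k (chan_conv d G n \<Lambda>1 \<Lambda>2) X) v =
      (\<Sum>x\<in>basis d (k + n). \<Sum>y\<in>basis d (k + n). \<Sum>t\<in>basis d n. \<Sum>u\<in>basis d n.
        ?h t u x y / of_nat (d ^ n))"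
    unfolding qform_def by (intro sum.cong refl)
  also have "\<dots> = (\<Sum>t\<in>basis d n. \<Sum>u\<in>basis d n. \<Sum>x\<in>basis d (k + n). \<Sum>y\<in>basis d (k + n).
      ?h t u x y) / of_nat (d ^ n)"
    by (subst sum_swap_inner_pairs) (simp only: sum_divide_distrib)
  finally show ?thesis .
qed

lemma chan_conv_completely_positive:
  assumes n: "1 \<le> n" and X: "psd d (k + n) X"
  shows "psd d (k + n) (idtensor k (chan_conv d G n \<Lambda>1 \<Lambda>2) X)"
proof -
  let ?Z = "\<lambda>t. idtensor_pair d k n \<Lambda>1 \<Lambda>2 (push d (k + n) (lift_key k t) X)"
  have Xop: "is_op d (k + n) X" using X by (simp add: psd_iff_qform)
  have "0 \<le> (\<Sum>x\<in>basis d (k + n). \<Sum>y\<in>basis d (k + n).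
      cnj (v x) * ?Z t (conv_index k u x) (conv_index k u y) * v y)"
    if t: "t \<in> basis d n" and u: "u \<in> basis d n" for t u v
  proof (rule psd_pullback_qform_nonneg[where \<psi> = "conv_index k u"])
    show "psd d (k + n + n) (?Z t)"
      using t by (intro psd_idtensor_pair channel_1 channel_2 psd_push X inj_on_lift_key lift_key_in_basis)
  qed (rule conv_index_in_basis[OF u])
  moreover have "0 \<le> inverse (of_nat (d ^ n) :: complex)"
    by (simp add: less_eq_complex_def)
  ultimately have "0 \<le> qform d (k + n) (idtensor k (chan_conv d G n \<Lambda>1 \<Lambda>2) X) v" for v
    by (simp add: qform_idtensor_chan_conv[OF Xop] divide_inverse sum_nonneg)
  with idtensor_chan_conv_is_op[OF n Xop] show ?thesis
    by (simp add: psd_iff_qform)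
qed

end

theorem mainTheorem18:
  fixes d n :: nat and G :: "nat \<Rightarrow> nat \<Rightarrow> int" and \<Lambda>1 \<Lambda>2 :: "qop \<Rightarrow> qop"
  assumes "prime d" and "n \<ge> 1"
    and "nontrivial_G d G" and "invertible_G d G"
    and "is_channel d n \<Lambda>1" and "is_channel d n \<Lambda>2"
  shows "is_channel d n (chan_conv d G n \<Lambda>1 \<Lambda>2) \<and>
         (\<forall>\<rho>. is_op d n \<rho> \<longrightarrow>
            (\<forall>x\<in>basis d n. \<forall>y\<in>basis d n.
               chan_conv d G n \<Lambda>1 \<Lambda>2 \<rho> x y =
               Emap d G n (chan_tensor d n \<Lambda>1 \<Lambda>2 (Einv d G n \<rho>)) x y))"
proof -
  interpret channel_pair d G n \<Lambda>1 \<Lambda>2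
    using assms prime_gt_1_nat coprime_det_if_invertible_G by unfold_locales auto
  have "is_channel d n (chan_conv d G n \<Lambda>1 \<Lambda>2)"
    unfolding is_channel_def
    using chan_of_choi_linear chan_conv_is_op trace_chan_conv chan_conv_completely_positive[OF assms(2)]
    by (simp add: chan_conv_def)
  then show ?thesis
    by (simp add: chan_conv_apply Emap_chan_tensor_Einv_apply)
qed

end
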